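(* Let $G$ be a finitely generated amenable group, and let $F=(F_n)_{n=1}^\infty$ be a sequence of finite subsets of $G$ that is both a left- and a right-Følner sequence. Then $\textup{cr}_F(G)=\textup{dc}_F(G)$.
   Context: $F$ is left-Følner if $|xF_n\triangle F_n|/|F_n|\to0$ for every $x\in G$, right-Følner if $|F_nx\triangle F_n|/|F_n|\to0$ for every $x\in G$. Writing $\mathcal{C}(G)$ for the set of conjugacy classes of $G$, $\textup{cr}_F(G)=\limsup_{n\to\infty}\frac{|\{C\in\mathcal{C}(G):C\cap F_n\ne\varnothing\}|}{|F_n|}$. $\textup{dc}_F(G)=\limsup_{n\to\infty}(\mu_n\times\mu_n)(\{(x,y):xy=yx\})$, where $\mu_n$ is the uniform probability measure on $F_n$. *)

theory Defs
  imports "HOL-Algebra.Algebra" "HOL-Library.Liminf_Limsup" "HOL-Library.Extended_Real"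
begin

definition fin_gen_group :: "('a, 'b) monoid_scheme \<Rightarrow> bool" where
  "fin_gen_group G \<longleftrightarrow> group G \<and>
     (\<exists>S. finite S \<and> S \<subseteq> carrier G \<and> generate G S = carrier G)"

definition amenable_group :: "('a, 'b) monoid_scheme \<Rightarrow> bool" where
  "amenable_group G \<longleftrightarrow> group G \<and>
     (\<exists>m :: 'a set \<Rightarrow> real.
        (\<forall>A. A \<subseteq> carrier G \<longrightarrow> m A \<ge> 0) \<and>
        m (carrier G) = 1 \<and>
        (\<forall>A B. A \<subseteq> carrier G \<longrightarrow> B \<subseteq> carrier G \<longrightarrow> A \<inter> B = {} \<longrightarrow> m (A \<union> B) = m A + m B) \<and>
        (\<forall>g A. g \<in> carrier G \<longrightarrow> A \<subseteq> carrier G \<longrightarrow> m (g <#\<^bsub>G\<^esub> A) = m A))"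

definition sym_diff_set :: "'a set \<Rightarrow> 'a set \<Rightarrow> 'a set" where
  "sym_diff_set A B = (A - B) \<union> (B - A)"

text \<open>A sequence of nonempty finite subsets of G (indexed from n = 1 in the paper;
  the index shift is immaterial for limits).\<close>
definition fin_subset_seq :: "('a, 'b) monoid_scheme \<Rightarrow> (nat \<Rightarrow> 'a set) \<Rightarrow> bool" where
  "fin_subset_seq G F \<longleftrightarrow> (\<forall>n. finite (F n) \<and> F n \<noteq> {} \<and> F n \<subseteq> carrier G)"

definition left_folner :: "('a, 'b) monoid_scheme \<Rightarrow> (nat \<Rightarrow> 'a set) \<Rightarrow> bool" where
  "left_folner G F \<longleftrightarrow> fin_subset_seq G F \<and>
     (\<forall>x \<in> carrier G.
        (\<lambda>n. real (card (sym_diff_set (x <#\<^bsub>G\<^esub> F n) (F n))) / real (card (F n))) \<longlonglongrightarrow> 0)"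

definition right_folner :: "('a, 'b) monoid_scheme \<Rightarrow> (nat \<Rightarrow> 'a set) \<Rightarrow> bool" where
  "right_folner G F \<longleftrightarrow> fin_subset_seq G F \<and>
     (\<forall>x \<in> carrier G.
        (\<lambda>n. real (card (sym_diff_set (F n #>\<^bsub>G\<^esub> x) (F n))) / real (card (F n))) \<longlonglongrightarrow> 0)"

definition conj_class :: "('a, 'b) monoid_scheme \<Rightarrow> 'a \<Rightarrow> 'a set" where
  "conj_class G x = {g \<otimes>\<^bsub>G\<^esub> x \<otimes>\<^bsub>G\<^esub> inv\<^bsub>G\<^esub> g | g. g \<in> carrier G}"

definition conj_classes :: "('a, 'b) monoid_scheme \<Rightarrow> 'a set set" where
  "conj_classes G = conj_class G ` carrier G"

definition conj_ratio :: "('a, 'b) monoid_scheme \<Rightarrow> (nat \<Rightarrow> 'a set) \<Rightarrow> ereal" where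
  "conj_ratio G F = limsup (\<lambda>n.
     ereal (real (card {C \<in> conj_classes G. C \<inter> F n \<noteq> {}}) / real (card (F n))))"

text \<open>Degree of commutativity: (mu_n x mu_n) of commuting pairs, mu_n uniform on F n.\<close>
definition deg_comm :: "('a, 'b) monoid_scheme \<Rightarrow> (nat \<Rightarrow> 'a set) \<Rightarrow> ereal" where
  "deg_comm G F = limsup (\<lambda>n.
     ereal (real (card {(x, y) \<in> F n \<times> F n. x \<otimes>\<^bsub>G\<^esub> y = y \<otimes>\<^bsub>G\<^esub> x}) / (real (card (F n)))^2))"

end

theory Submission
  imports Defs
begin

(* Write A_n for the density of commuting pairs in F_n and B_n for the proportion of
   conjugacy classes met by F_n. Both are averages over x in F_n: of |C(x) \<inter> F_n| / |F_n|
   and of 1 / |x^G \<inter> F_n| respectively. Fix a finite ball K in a symmetric generating set.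
   If every K-conjugate of x lies in F_n, then by the left Foelner property each fibre
   {y \<in> F_n. y x y^-1 = g x g^-1} has about |C(x) \<inter> F_n| elements. Either the K-orbit of x
   is its whole class, and then these fibres partition F_n, or the orbit is large and both
   quantities are small. The remaining x, moved out of F_n by some conjugation by K, are few
   by the left and right Foelner properties. *)

lemma card_Collect_diff_le_card_sym_diff:
  assumes "finite A" "finite B"
  shows "\<bar>real (card {w \<in> A. P w}) - real (card {w \<in> B. P w})\<bar> \<le> real (card (sym_diff_set A B))"
proof -
  have "card {w \<in> A. P w} \<le> card ({w \<in> B. P w} \<union> (A - B))"
    using assms by (intro card_mono) auto
  then have AB: "card {w \<in> A. P w} \<le> card {w \<in> B. P w} + card (A - B)"
    using card_Un_le le_trans by blast
  have "card {w \<in> B. P w} \<le> card ({w \<in> A. P w} \<union> (B - A))"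
    using assms by (intro card_mono) auto
  then have BA: "card {w \<in> B. P w} \<le> card {w \<in> A. P w} + card (B - A)"
    using card_Un_le le_trans by blast
  have "card (sym_diff_set A B) = card (A - B) + card (B - A)"
    unfolding sym_diff_set_def using assms by (intro card_Un_disjoint) auto
  then show ?thesis using AB BA by linarith
qed

lemma card_preimage_close_to_fibre_sum:
  fixes f :: "'a \<Rightarrow> 'b" and s \<delta> :: real
  assumes F: "finite F" and V: "finite V"
    and fibres: "\<And>z. z \<in> V \<Longrightarrow> \<bar>real (card {y \<in> F. f y = z}) - s\<bar> \<le> \<delta>"
  shows "\<bar>real (card {y \<in> F. f y \<in> V}) - real (card V) * s\<bar> \<le> real (card V) * \<delta>"
proof -
  have "{y \<in> F. f y \<in> V} = (\<Union>z\<in>V. {y \<in> F. f y = z})"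
    by blast
  also have "card \<dots> = (\<Sum>z\<in>V. card {y \<in> F. f y = z})"
    by (rule card_UN_disjoint) (use F V in auto)
  finally have "card {y \<in> F. f y \<in> V} = (\<Sum>z\<in>V. card {y \<in> F. f y = z})" .
  then have "real (card {y \<in> F. f y \<in> V}) - real (card V) * s = (\<Sum>z\<in>V. real (card {y \<in> F. f y = z}) - s)"
    by (simp add: sum_subtractf)
  also have "\<bar>\<dots>\<bar> \<le> (\<Sum>z\<in>V. \<bar>real (card {y \<in> F. f y = z}) - s\<bar>)"
    by (rule sum_abs)
  also have "\<dots> \<le> real (card V) * \<delta>"
    using sum_mono[of V _ "\<lambda>_. \<delta>"] fibres by simp
  finally show ?thesis .
qed

lemma abs_div_sub_inverse_le_if_close:
  fixes N k s \<delta> :: real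
  assumes "N > 0" "k \<ge> 1" "\<bar>N - k * s\<bar> \<le> k * \<delta> * N"
  shows "\<bar>s / N - 1 / k\<bar> \<le> \<delta>"
proof -
  have "\<bar>s / N - 1 / k\<bar> = \<bar>N - k * s\<bar> / (k * N)"
    using assms by (simp add: field_simps abs_minus_commute)
  also have "\<dots> \<le> \<delta>"
    using assms by (simp add: divide_le_eq mult.commute mult.left_commute)
  finally show ?thesis .
qed

lemma abs_div_sub_inverse_le_if_large:
  fixes N k c s \<delta> m :: real
  assumes "N > 0" "m > 0" "k \<ge> m" "c \<ge> m" "s \<ge> 0" "\<delta> \<ge> 0" "k * (s - \<delta> * N) \<le> N"
  shows "\<bar>s / N - 1 / c\<bar> \<le> \<delta> + 1 / m"
proof -
  have "m * (s - \<delta> * N) \<le> N"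
  proof (cases "s - \<delta> * N \<ge> 0")
    case True
    then have "m * (s - \<delta> * N) \<le> k * (s - \<delta> * N)"
      using assms by (intro mult_right_mono) auto
    then show ?thesis using assms by linarith
  next
    case False
    then show ?thesis using assms by (smt (verit) mult_pos_neg)
  qed
  then have "s - \<delta> * N \<le> N / m"
    using assms by (simp add: field_simps)
  then have "s / N \<le> \<delta> + 1 / m"
    using assms by (simp add: field_simps)
  moreover have "1 / c \<le> 1 / m"
    using assms by (simp add: frac_le)
  moreover have "s / N \<ge> 0" "1 / c \<ge> 0"
    using assms by auto
  ultimately show ?thesis
    using assms(6) unfolding abs_le_iff by linarith
qed

lemma abs_sum_le_if_small_off:
  fixes e :: "'a \<Rightarrow> real"
  assumes "finite F" "B \<subseteq> F" "\<And>x. x \<in> F \<Longrightarrow> \<bar>e x\<bar> \<le> 1"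
    "\<And>x. x \<in> F - B \<Longrightarrow> \<bar>e x\<bar> \<le> \<eta>" "\<eta> \<ge> 0"
  shows "\<bar>\<Sum>x\<in>F. e x\<bar> \<le> real (card F) * \<eta> + real (card B)"
proof -
  have "\<bar>\<Sum>x\<in>F. e x\<bar> \<le> (\<Sum>x\<in>F - B. \<bar>e x\<bar>) + (\<Sum>x\<in>B. \<bar>e x\<bar>)"
    using sum_abs[of e F] sum.subset_diff[OF assms(2,1), of "\<lambda>x. \<bar>e x\<bar>"] by linarith
  also have "\<dots> \<le> (\<Sum>x\<in>F - B. \<eta>) + (\<Sum>x\<in>B. 1)"
    using assms by (intro add_mono sum_mono) auto
  also have "\<dots> = real (card (F - B)) * \<eta> + real (card B)"
    by simp
  also have "\<dots> \<le> real (card F) * \<eta> + real (card B)"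
    using assms by (intro add_mono mult_right_mono) (auto intro: card_mono)
  finally show ?thesis .
qed

lemma limsup_ereal_eq_if_eventually_close:
  fixes a b :: "nat \<Rightarrow> real"
  assumes "\<And>e. e > 0 \<Longrightarrow> eventually (\<lambda>n. \<bar>a n - b n\<bar> \<le> e) sequentially"
  shows "limsup (\<lambda>n. ereal (a n)) = limsup (\<lambda>n. ereal (b n))"
proof -
  have le: "limsup (\<lambda>n. ereal (a n)) \<le> limsup (\<lambda>n. ereal (b n))"
    if close: "\<And>e. e > 0 \<Longrightarrow> eventually (\<lambda>n. a n \<le> b n + e) sequentially" for a b :: "nat \<Rightarrow> real"
  proof (rule ereal_le_epsilon2)
    fix e :: real assume "e > 0"
    have "limsup (\<lambda>n. ereal (a n)) \<le> limsup (\<lambda>n. ereal (b n) + ereal e)"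
      using close[OF \<open>e > 0\<close>] by (intro Limsup_mono) (auto elim!: eventually_mono)
    also have "\<dots> = limsup (\<lambda>n. ereal (b n)) + ereal e"
      by (rule Limsup_add_ereal_right) auto
    finally show "limsup (\<lambda>n. ereal (a n)) \<le> limsup (\<lambda>n. ereal (b n)) + ereal e" .
  qed
  show ?thesis
  proof (intro antisym le)
    fix e :: real assume "e > 0"
    show "eventually (\<lambda>n. a n \<le> b n + e) sequentially"
      using assms[OF \<open>e > 0\<close>] by eventually_elim linarith
    show "eventually (\<lambda>n. b n \<le> a n + e) sequentially"
      using assms[OF \<open>e > 0\<close>] by eventually_elim linarith
  qed
qed

lemma eventually_card_le_if_ratio_tendsto_zero:
  assumes "(\<lambda>n. real (card (Y n)) / real (card (F n))) \<longlonglongrightarrow> 0" "d > 0" "\<And>n. card (F n) > 0"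
  shows "eventually (\<lambda>n. real (card (Y n)) \<le> d * real (card (F n))) sequentially"
  using order_tendstoD(2)[OF assms(1,2)]
  by eventually_elim (use assms(3) in \<open>auto simp: divide_less_eq less_imp_le\<close>)

primrec word_ball :: "('a, 'b) monoid_scheme \<Rightarrow> 'a set \<Rightarrow> nat \<Rightarrow> 'a set" where
  "word_ball G T 0 = {\<one>\<^bsub>G\<^esub>}"
| "word_ball G T (Suc j) = T <#>\<^bsub>G\<^esub> word_ball G T j"

definition conj_orbit :: "('a, 'b) monoid_scheme \<Rightarrow> 'a set \<Rightarrow> 'a \<Rightarrow> 'a set" where
  "conj_orbit G K x = (\<lambda>g. g \<otimes>\<^bsub>G\<^esub> x \<otimes>\<^bsub>G\<^esub> inv\<^bsub>G\<^esub> g) ` K"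

context group begin

lemma inv_m_cancel_left [simp]: "\<lbrakk>g \<in> carrier G; x \<in> carrier G\<rbrakk> \<Longrightarrow> inv g \<otimes> (g \<otimes> x) = x"
  by (simp add: m_assoc[symmetric])

lemma m_inv_cancel_left [simp]: "\<lbrakk>g \<in> carrier G; x \<in> carrier G\<rbrakk> \<Longrightarrow> g \<otimes> (inv g \<otimes> x) = x"
  by (simp add: m_assoc[symmetric])

lemma conj_class_self: "x \<in> carrier G \<Longrightarrow> x \<in> conj_class G x"
  unfolding conj_class_def by (rule CollectI, rule exI[of _ \<one>]) auto

lemma conj_class_subset_carrier: "x \<in> carrier G \<Longrightarrow> conj_class G x \<subseteq> carrier G"
  unfolding conj_class_def by auto

lemma conj_conj:
  "\<lbrakk>g \<in> carrier G; h \<in> carrier G; x \<in> carrier G\<rbrakk> \<Longrightarrow>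
    h \<otimes> (g \<otimes> x \<otimes> inv g) \<otimes> inv h = (h \<otimes> g) \<otimes> x \<otimes> inv (h \<otimes> g)"
  by (simp add: inv_mult_group m_assoc)

lemma conj_class_conj_closed:
  "\<lbrakk>x \<in> carrier G; y \<in> conj_class G x; h \<in> carrier G\<rbrakk> \<Longrightarrow> h \<otimes> y \<otimes> inv h \<in> conj_class G x"
  unfolding conj_class_def by (auto simp: conj_conj)

lemma conj_class_subset_if_mem:
  "\<lbrakk>x \<in> carrier G; y \<in> conj_class G x\<rbrakk> \<Longrightarrow> conj_class G y \<subseteq> conj_class G x"
  using conj_class_conj_closed unfolding conj_class_def[of G y] by blast

lemma conj_class_eq_if_mem:
  assumes x: "x \<in> carrier G" and y: "y \<in> conj_class G x"
  shows "conj_class G y = conj_class G x"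
proof -
  obtain g where g: "g \<in> carrier G" "y = g \<otimes> x \<otimes> inv g"
    using y unfolding conj_class_def by auto
  have "x = inv g \<otimes> y \<otimes> inv (inv g)"
    using g x by (simp add: m_assoc)
  then have "x \<in> conj_class G y"
    using g unfolding conj_class_def by blast
  then show ?thesis
    using x y conj_class_subset_if_mem conj_class_subset_carrier by blast
qed

lemma word_ball_subset_carrier: "T \<subseteq> carrier G \<Longrightarrow> word_ball G T j \<subseteq> carrier G"
  by (induction j) (auto simp: set_mult_def)

lemma finite_word_ball: "finite T \<Longrightarrow> finite (word_ball G T j)"
  by (induction j) (auto simp: set_mult_def)

lemma one_in_word_ball: "\<one> \<in> T \<Longrightarrow> \<one> \<in> word_ball G T j"
  by (induction j) (auto simp: set_mult_def intro!: bexI[of _ \<one>])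

lemma conj_orbit_subset_conj_class:
  "K \<subseteq> carrier G \<Longrightarrow> conj_orbit G K x \<subseteq> conj_class G x"
  unfolding conj_orbit_def conj_class_def by auto

lemma conj_orbit_word_ball_Suc:
  assumes "T \<subseteq> carrier G" "x \<in> carrier G"
  shows "conj_orbit G (word_ball G T (Suc j)) x =
    (\<Union>t\<in>T. (\<lambda>z. t \<otimes> z \<otimes> inv t) ` conj_orbit G (word_ball G T j) x)"
proof -
  have B: "word_ball G T j \<subseteq> carrier G"
    using word_ball_subset_carrier assms(1) .
  have "conj_orbit G (word_ball G T (Suc j)) x =
      (\<Union>t\<in>T. \<Union>b\<in>word_ball G T j. {(t \<otimes> b) \<otimes> x \<otimes> inv (t \<otimes> b)})"
    by (auto simp: conj_orbit_def set_mult_def)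
  also have "\<dots> = (\<Union>t\<in>T. \<Union>b\<in>word_ball G T j. {t \<otimes> (b \<otimes> x \<otimes> inv b) \<otimes> inv t})"
    using assms B by (intro SUP_cong) (auto simp: conj_conj subset_iff)
  also have "\<dots> = (\<Union>t\<in>T. (\<lambda>z. t \<otimes> z \<otimes> inv t) ` conj_orbit G (word_ball G T j) x)"
    by (auto simp: conj_orbit_def)
  finally show ?thesis .
qed

lemma conj_class_subset_if_conj_closed:
  assumes gen: "generate G T = carrier G" and T_inv: "\<And>t. t \<in> T \<Longrightarrow> inv t \<in> T"
    and V: "V \<subseteq> carrier G" "x \<in> V"
    and closed: "\<And>t z. t \<in> T \<Longrightarrow> z \<in> V \<Longrightarrow> t \<otimes> z \<otimes> inv t \<in> V"
  shows "conj_class G x \<subseteq> V"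
proof -
  have "\<forall>z\<in>V. g \<otimes> z \<otimes> inv g \<in> V" if "g \<in> generate G T" for g
    using that
  proof (induction rule: generate.induct)
    case one
    then show ?case using V by auto
  next
    case (incl h)
    then show ?case using closed by blast
  next
    case (inv h)
    then show ?case using closed T_inv by blast
  next
    case (eng h1 h2)
    then show ?case
      using V gen generate_in_carrier conj_conj
      by (metis (no_types, lifting) subsetD)
  qed
  then show ?thesis
    using gen V unfolding conj_class_def by blast
qed

(* An orbit that stops growing is closed under conjugation by the generators,
   hence is a whole conjugacy class. *)
lemma conj_orbit_word_ball_eq_or_card_ge:
  assumes T: "finite T" "T \<subseteq> carrier G" "\<one> \<in> T" "\<And>t. t \<in> T \<Longrightarrow> inv t \<in> T"
    and gen: "generate G T = carrier G" and x: "x \<in> carrier G"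
  shows "conj_orbit G (word_ball G T j) x = conj_class G x
    \<or> Suc j \<le> card (conj_orbit G (word_ball G T j) x)"
proof (induction j)
  case 0
  then show ?case by (simp add: conj_orbit_def)
next
  case (Suc j)
  define V where "V i = conj_orbit G (word_ball G T i) x" for i
  have V_class: "V i \<subseteq> conj_class G x" for i
    unfolding V_def using conj_orbit_subset_conj_class word_ball_subset_carrier T by blast
  then have V_carrier: "V i \<subseteq> carrier G" for i
    using conj_class_subset_carrier x by blast
  have V_Suc: "V (Suc i) = (\<Union>t\<in>T. (\<lambda>z. t \<otimes> z \<otimes> inv t) ` V i)" for i
    unfolding V_def using conj_orbit_word_ball_Suc T x by blast
  have V_mono: "V j \<subseteq> V (Suc j)"
  proof
    fix z assume z: "z \<in> V j"
    then have "z = \<one> \<otimes> z \<otimes> inv \<one>" using V_carrier[of j] by auto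
    then show "z \<in> V (Suc j)" unfolding V_Suc using T z by blast
  qed
  consider "V j = conj_class G x" | "V (Suc j) = V j" | "V j \<subset> V (Suc j)"
    using V_mono by blast
  then show ?case
  proof cases
    case 1
    then show ?thesis using V_mono V_class unfolding V_def by blast
  next
    case 2
    have "x \<in> V j"
      unfolding V_def conj_orbit_def using one_in_word_ball T x by force
    then have "conj_class G x \<subseteq> V j"
      using conj_class_subset_if_conj_closed[OF gen T(4) V_carrier] 2
      unfolding V_Suc by blast
    then show ?thesis using 2 V_class unfolding V_def by blast
  next
    case 3
    have "finite (V (Suc j))"
      unfolding V_def conj_orbit_def using finite_word_ball T by blast
    then have "card (V j) < card (V (Suc j))" using 3 psubset_card_mono by blast
    moreover have "Suc j \<le> card (V j)"
      using Suc.IH 3 V_class[of "Suc j"] unfolding V_def by blast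
    ultimately show ?thesis unfolding V_def by simp
  qed
qed

lemma obtain_conj_orbits_full_or_large:
  assumes "fin_gen_group G"
  obtains K where "finite K" "K \<subseteq> carrier G"
    "\<And>x. x \<in> carrier G \<Longrightarrow> conj_orbit G K x = conj_class G x \<or> Suc M \<le> card (conj_orbit G K x)"
proof -
  obtain S where S: "finite S" "S \<subseteq> carrier G" "generate G S = carrier G"
    using assms unfolding fin_gen_group_def by blast
  define T where "T = insert \<one> (S \<union> (\<lambda>s. inv s) ` S)"
  have T: "finite T" "T \<subseteq> carrier G" "\<one> \<in> T" "\<And>t. t \<in> T \<Longrightarrow> inv t \<in> T"
    unfolding T_def using S by auto
  moreover have "generate G T = carrier G"
  proof
    show "generate G T \<subseteq> carrier G"
      using generate_in_carrier[OF T(2)] by blast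
    show "carrier G \<subseteq> generate G T"
      using mono_generate[of S T] S(3) unfolding T_def by blast
  qed
  ultimately show thesis
    by (intro that[of "word_ball G T M"] finite_word_ball word_ball_subset_carrier
        conj_orbit_word_ball_eq_or_card_ge)
qed

lemma conj_eq_iff_commute:
  assumes "g \<in> carrier G" "w \<in> carrier G" "x \<in> carrier G"
  shows "(g \<otimes> w) \<otimes> x \<otimes> inv (g \<otimes> w) = g \<otimes> x \<otimes> inv g \<longleftrightarrow> x \<otimes> w = w \<otimes> x"
proof -
  have "(g \<otimes> w) \<otimes> x \<otimes> inv (g \<otimes> w) = g \<otimes> (w \<otimes> x \<otimes> inv w) \<otimes> inv g"
    using assms by (simp add: conj_conj)
  then have "(g \<otimes> w) \<otimes> x \<otimes> inv (g \<otimes> w) = g \<otimes> x \<otimes> inv g \<longleftrightarrow> w \<otimes> x \<otimes> inv w = x"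
    using assms by simp
  also have "\<dots> \<longleftrightarrow> w \<otimes> x = x \<otimes> w"
    using assms by (simp add: inv_solve_right')
  finally show ?thesis by auto
qed

lemma card_conj_fibre_close_to_centralizer:
  assumes F: "finite F" "F \<subseteq> carrier G" and g: "g \<in> carrier G" and x: "x \<in> carrier G"
  shows "\<bar>real (card {y \<in> F. y \<otimes> x \<otimes> inv y = g \<otimes> x \<otimes> inv g}) - real (card {y \<in> F. x \<otimes> y = y \<otimes> x})\<bar>
    \<le> real (card (sym_diff_set (inv g <# F) F))"
proof -
  have "{y \<in> F. y \<otimes> x \<otimes> inv y = g \<otimes> x \<otimes> inv g} = (\<lambda>w. g \<otimes> w) ` {w \<in> inv g <# F. x \<otimes> w = w \<otimes> x}"
  proof (intro equalityI subsetI)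
    fix y assume y: "y \<in> {y \<in> F. y \<otimes> x \<otimes> inv y = g \<otimes> x \<otimes> inv g}"
    then have "y = g \<otimes> (inv g \<otimes> y)" "inv g \<otimes> y \<in> inv g <# F"
      using F g by (auto simp: l_coset_def)
    moreover have "x \<otimes> (inv g \<otimes> y) = (inv g \<otimes> y) \<otimes> x"
      using conj_eq_iff_commute[of g "inv g \<otimes> y" x] y F g x by auto
    ultimately show "y \<in> (\<lambda>w. g \<otimes> w) ` {w \<in> inv g <# F. x \<otimes> w = w \<otimes> x}"
      by blast
  next
    fix y assume "y \<in> (\<lambda>w. g \<otimes> w) ` {w \<in> inv g <# F. x \<otimes> w = w \<otimes> x}"
    then obtain f where f: "f \<in> F" "x \<otimes> (inv g \<otimes> f) = (inv g \<otimes> f) \<otimes> x" "y = g \<otimes> (inv g \<otimes> f)"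
      unfolding l_coset_def by blast
    then show "y \<in> {y \<in> F. y \<otimes> x \<otimes> inv y = g \<otimes> x \<otimes> inv g}"
      using conj_eq_iff_commute[of g "inv g \<otimes> f" x] F g x by auto
  qed
  moreover have "inj_on (\<lambda>w. g \<otimes> w) (inv g <# F)"
    using inj_on_cmult[OF g] l_coset_subset_G F g by (meson inj_on_subset inv_closed)
  ultimately have "card {y \<in> F. y \<otimes> x \<otimes> inv y = g \<otimes> x \<otimes> inv g} = card {w \<in> inv g <# F. x \<otimes> w = w \<otimes> x}"
    by (simp add: card_image inj_on_subset)
  moreover have "finite (inv g <# F)"
    using F unfolding l_coset_def by simp
  ultimately show ?thesis
    using card_Collect_diff_le_card_sym_diff[of "inv g <# F" F] F by simp
qed

lemma card_conj_escape_le: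
  assumes F: "finite F" "F \<subseteq> carrier G" and g: "g \<in> carrier G"
  shows "card {x \<in> F. g \<otimes> x \<otimes> inv g \<notin> F}
    \<le> card (sym_diff_set (g <# F) F) + card (sym_diff_set (F #> inv g) F)"
proof -
  define A where "A = {x \<in> F. g \<otimes> x \<notin> F}"
  define B where "B = {x \<in> F. g \<otimes> x \<in> F \<and> g \<otimes> x \<otimes> inv g \<notin> F}"
  have fin: "finite (sym_diff_set (g <# F) F)" "finite (sym_diff_set (F #> inv g) F)"
    using F unfolding sym_diff_set_def l_coset_def r_coset_def by auto
  have "(\<lambda>x. g \<otimes> x) ` A \<subseteq> sym_diff_set (g <# F) F"
    unfolding A_def sym_diff_set_def l_coset_def by auto
  moreover have "inj_on (\<lambda>x. g \<otimes> x) A"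
    using inj_on_cmult[OF g] F unfolding A_def by (auto intro: inj_on_subset)
  ultimately have cA: "card A \<le> card (sym_diff_set (g <# F) F)"
    using fin card_inj_on_le by blast
  have "(\<lambda>x. g \<otimes> x \<otimes> inv g) ` B \<subseteq> sym_diff_set (F #> inv g) F"
    unfolding B_def sym_diff_set_def r_coset_def by auto
  moreover have "inj_on (\<lambda>x. g \<otimes> x \<otimes> inv g) B"
    using g unfolding B_def by (intro inj_onI) (auto dest!: subsetD[OF F(2)])
  ultimately have cB: "card B \<le> card (sym_diff_set (F #> inv g) F)"
    using fin card_inj_on_le by blast
  have "{x \<in> F. g \<otimes> x \<otimes> inv g \<notin> F} \<subseteq> A \<union> B"
    unfolding A_def B_def by blast
  moreover have "finite (A \<union> B)"
    unfolding A_def B_def using F by simp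
  ultimately have "card {x \<in> F. g \<otimes> x \<otimes> inv g \<notin> F} \<le> card (A \<union> B)"
    by (simp add: card_mono)
  also have "\<dots> \<le> card A + card B"
    by (rule card_Un_le)
  finally show ?thesis using cA cB by linarith
qed

lemma centralizer_ratio_close_to_inv_card_conj_class:
  assumes F: "finite F" "F \<subseteq> carrier G" and x: "x \<in> F" and K: "K \<subseteq> carrier G"
    and orbit: "conj_orbit G K x = conj_class G x \<or> Suc M \<le> card (conj_orbit G K x)"
    and inside: "conj_orbit G K x \<subseteq> F" and d: "d \<ge> 0"
    and folner: "\<And>g. g \<in> K \<Longrightarrow> real (card (sym_diff_set (inv g <# F) F)) \<le> d * real (card F)"
  shows "\<bar>real (card {y \<in> F. x \<otimes> y = y \<otimes> x}) / real (card F)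
    - 1 / real (card (conj_class G x \<inter> F))\<bar> \<le> d + 1 / real (Suc M)"
proof -
  define V where "V = conj_orbit G K x"
  define N where "N = real (card F)"
  define s where "s = real (card {y \<in> F. x \<otimes> y = y \<otimes> x})"
  have xc: "x \<in> carrier G" using x F by blast
  have N: "N > 0" unfolding N_def using F x by (auto simp: card_gt_0_iff)
  have V: "finite V" "V \<subseteq> conj_class G x \<inter> F"
    unfolding V_def using F inside conj_orbit_subset_conj_class[OF K] finite_subset by auto
  have "\<bar>real (card {y \<in> F. y \<otimes> x \<otimes> inv y = z}) - s\<bar> \<le> d * N" if z: "z \<in> V" for z
  proof -
    obtain g where g: "g \<in> K" "z = g \<otimes> x \<otimes> inv g"
      using z unfolding V_def conj_orbit_def by blast
    have "\<bar>real (card {y \<in> F. y \<otimes> x \<otimes> inv y = g \<otimes> x \<otimes> inv g}) - s\<bar>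
        \<le> real (card (sym_diff_set (inv g <# F) F))"
      using card_conj_fibre_close_to_centralizer[OF F _ xc] g K unfolding s_def by blast
    also have "\<dots> \<le> d * N"
      using folner g(1) unfolding N_def .
    finally show ?thesis using g(2) by simp
  qed
  then have close: "\<bar>real (card {y \<in> F. y \<otimes> x \<otimes> inv y \<in> V}) - real (card V) * s\<bar> \<le> real (card V) * (d * N)"
    by (rule card_preimage_close_to_fibre_sum[OF F(1) V(1), where f = "\<lambda>y. y \<otimes> x \<otimes> inv y"])
  from orbit consider "V = conj_class G x" | "Suc M \<le> card V"
    unfolding V_def by blast
  then show ?thesis
  proof cases
    case 1
    then have "{y \<in> F. y \<otimes> x \<otimes> inv y \<in> V} = F" "conj_class G x \<inter> F = V"
      using F V unfolding conj_class_def by auto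
    moreover have "card V \<ge> 1"
      using 1 V(1) conj_class_self[OF xc] by (metis One_nat_def Suc_leI card_gt_0_iff empty_iff)
    ultimately have "\<bar>s / N - 1 / real (card (conj_class G x \<inter> F))\<bar> \<le> d"
      using abs_div_sub_inverse_le_if_close[OF N, of "real (card V)" s d] close
      unfolding N_def by (simp add: mult.assoc)
    moreover have "0 \<le> 1 / real (Suc M)"
      by simp
    ultimately show ?thesis
      unfolding s_def N_def by linarith
  next
    case 2
    have "card {y \<in> F. y \<otimes> x \<otimes> inv y \<in> V} \<le> card F"
      using F by (intro card_mono) auto
    then have "real (card V) * (s - d * N) \<le> N"
      using close unfolding N_def by (simp add: algebra_simps)
    moreover have "card V \<le> card (conj_class G x \<inter> F)"
      using V F by (intro card_mono) auto
    ultimately show ?thesis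
      using abs_div_sub_inverse_le_if_large[OF N, of "real (Suc M)" "real (card V)"] 2 d
      unfolding s_def N_def by simp
  qed
qed

lemma card_commuting_pairs_eq_sum:
  "finite F \<Longrightarrow> card {(x, y) \<in> F \<times> F. x \<otimes> y = y \<otimes> x} = (\<Sum>x\<in>F. card {y \<in> F. x \<otimes> y = y \<otimes> x})"
proof -
  assume "finite F"
  moreover have "{(x, y) \<in> F \<times> F. x \<otimes> y = y \<otimes> x} = (SIGMA x:F. {y \<in> F. x \<otimes> y = y \<otimes> x})"
    by blast
  ultimately show ?thesis
    by (simp add: card_SigmaI)
qed

lemma card_conj_classes_meeting_eq_sum:
  assumes F: "finite F" "F \<subseteq> carrier G"
  shows "real (card {C \<in> conj_classes G. C \<inter> F \<noteq> {}})
    = (\<Sum>x\<in>F. 1 / real (card (conj_class G x \<inter> F)))"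
proof -
  have classes: "{C \<in> conj_classes G. C \<inter> F \<noteq> {}} = conj_class G ` F"
  proof (intro equalityI subsetI)
    fix C assume "C \<in> {C \<in> conj_classes G. C \<inter> F \<noteq> {}}"
    then obtain z y where "z \<in> carrier G" "C = conj_class G z" "y \<in> C \<inter> F"
      unfolding conj_classes_def by blast
    then show "C \<in> conj_class G ` F"
      using conj_class_eq_if_mem by (metis IntE imageI)
  next
    fix C assume "C \<in> conj_class G ` F"
    then show "C \<in> {C \<in> conj_classes G. C \<inter> F \<noteq> {}}"
      unfolding conj_classes_def using F conj_class_self by blast
  qed
  have "(\<Sum>x\<in>F. 1 / real (card (conj_class G x \<inter> F)))
      = (\<Sum>C\<in>conj_class G ` F. \<Sum>x\<in>{x \<in> F. conj_class G x = C}. 1 / real (card (conj_class G x \<inter> F)))"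
    by (rule sum.image_gen[OF F(1)])
  also have "\<dots> = (\<Sum>C\<in>conj_class G ` F. 1)"
  proof (rule sum.cong[OF refl])
    fix C assume "C \<in> conj_class G ` F"
    then obtain x where x: "x \<in> F" "C = conj_class G x" by blast
    then have fibre: "{y \<in> F. conj_class G y = C} = C \<inter> F"
      using F conj_class_self conj_class_eq_if_mem by blast
    have "C \<inter> F \<noteq> {}" "finite (C \<inter> F)"
      using x F conj_class_self by auto
    moreover have "(\<Sum>y\<in>C \<inter> F. 1 / real (card (conj_class G y \<inter> F)))
        = (\<Sum>y\<in>C \<inter> F. 1 / real (card (C \<inter> F)))"
      using fibre by (intro sum.cong) auto
    ultimately show "(\<Sum>y\<in>{y \<in> F. conj_class G y = C}. 1 / real (card (conj_class G y \<inter> F))) = 1"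
      unfolding fibre by simp
  qed
  finally show ?thesis
    unfolding classes by simp
qed

lemma card_conj_escape_union_le:
  assumes F: "finite F" "F \<subseteq> carrier G" and K: "finite K" "K \<subseteq> carrier G"
    and left: "\<And>g. g \<in> K \<Longrightarrow> real (card (sym_diff_set (g <# F) F)) \<le> d * real (card F)"
    and right: "\<And>g. g \<in> K \<Longrightarrow> real (card (sym_diff_set (F #> inv g) F)) \<le> d * real (card F)"
  shows "real (card (\<Union>g\<in>K. {x \<in> F. g \<otimes> x \<otimes> inv g \<notin> F})) \<le> real (card K) * (2 * d * real (card F))"
proof -
  have "card (\<Union>g\<in>K. {x \<in> F. g \<otimes> x \<otimes> inv g \<notin> F}) \<le> (\<Sum>g\<in>K. card {x \<in> F. g \<otimes> x \<otimes> inv g \<notin> F})"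
    by (rule card_UN_le[OF K(1)])
  then have "real (card (\<Union>g\<in>K. {x \<in> F. g \<otimes> x \<otimes> inv g \<notin> F}))
      \<le> (\<Sum>g\<in>K. real (card {x \<in> F. g \<otimes> x \<otimes> inv g \<notin> F}))"
    by (simp flip: of_nat_sum)
  also have "\<dots> \<le> (\<Sum>g\<in>K. 2 * d * real (card F))"
  proof (rule sum_mono)
    fix g assume g: "g \<in> K"
    then have "card {x \<in> F. g \<otimes> x \<otimes> inv g \<notin> F}
        \<le> card (sym_diff_set (g <# F) F) + card (sym_diff_set (F #> inv g) F)"
      using card_conj_escape_le[OF F] K by blast
    then have "real (card {x \<in> F. g \<otimes> x \<otimes> inv g \<notin> F})
        \<le> real (card (sym_diff_set (g <# F) F)) + real (card (sym_diff_set (F #> inv g) F))"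
      by (simp flip: of_nat_add)
    then show "real (card {x \<in> F. g \<otimes> x \<otimes> inv g \<notin> F}) \<le> 2 * d * real (card F)"
      using left[OF g] right[OF g] by linarith
  qed
  finally show ?thesis by simp
qed

lemma commuting_ratio_close_to_class_ratio:
  assumes F: "finite F" "F \<noteq> {}" "F \<subseteq> carrier G" and K: "finite K" "K \<subseteq> carrier G"
    and orbits: "\<And>x. x \<in> carrier G \<Longrightarrow>
      conj_orbit G K x = conj_class G x \<or> Suc M \<le> card (conj_orbit G K x)"
    and d: "d \<ge> 0"
    and left: "\<And>g. g \<in> K \<Longrightarrow> real (card (sym_diff_set (g <# F) F)) \<le> d * real (card F)"
    and left_inv: "\<And>g. g \<in> K \<Longrightarrow> real (card (sym_diff_set (inv g <# F) F)) \<le> d * real (card F)"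
    and right_inv: "\<And>g. g \<in> K \<Longrightarrow> real (card (sym_diff_set (F #> inv g) F)) \<le> d * real (card F)"
  shows "\<bar>real (card {(x, y) \<in> F \<times> F. x \<otimes> y = y \<otimes> x}) / (real (card F))\<^sup>2
    - real (card {C \<in> conj_classes G. C \<inter> F \<noteq> {}}) / real (card F)\<bar>
    \<le> d + 1 / real (Suc M) + 2 * real (card K) * d"
proof -
  define N where "N = real (card F)"
  define e where "e x = real (card {y \<in> F. x \<otimes> y = y \<otimes> x}) / N
    - 1 / real (card (conj_class G x \<inter> F))" for x
  define B where "B = (\<Union>g\<in>K. {x \<in> F. g \<otimes> x \<otimes> inv g \<notin> F})"
  have N: "N > 0" unfolding N_def using F by (simp add: card_gt_0_iff)
  have average: "real (card {(x, y) \<in> F \<times> F. x \<otimes> y = y \<otimes> x}) / N\<^sup>2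
      - real (card {C \<in> conj_classes G. C \<inter> F \<noteq> {}}) / N = (\<Sum>x\<in>F. e x) / N"
    using N unfolding e_def card_commuting_pairs_eq_sum[OF F(1)] card_conj_classes_meeting_eq_sum[OF F(1,3)]
    by (simp add: power2_eq_square sum_subtractf sum_divide_distrib diff_divide_distrib)
  have "\<bar>e x\<bar> \<le> 1" if x: "x \<in> F" for x
  proof -
    have "card {y \<in> F. x \<otimes> y = y \<otimes> x} \<le> card F"
      using F by (intro card_mono) auto
    then have "0 \<le> real (card {y \<in> F. x \<otimes> y = y \<otimes> x}) / N"
      "real (card {y \<in> F. x \<otimes> y = y \<otimes> x}) / N \<le> 1"
      using N unfolding N_def by auto
    moreover have "card (conj_class G x \<inter> F) \<ge> 1"
      using x F conj_class_self by (metis IntI Suc_leI card_gt_0_iff finite_Int One_nat_def empty_iff subsetD)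
    then have "0 \<le> 1 / real (card (conj_class G x \<inter> F))" "1 / real (card (conj_class G x \<inter> F)) \<le> 1"
      by auto
    ultimately show ?thesis
      unfolding e_def by linarith
  qed
  moreover have "\<bar>e x\<bar> \<le> d + 1 / real (Suc M)" if x: "x \<in> F - B" for x
  proof -
    have "conj_orbit G K x \<subseteq> F"
      using x unfolding B_def conj_orbit_def by blast
    then show ?thesis
      unfolding e_def N_def
      using centralizer_ratio_close_to_inv_card_conj_class[OF F(1,3) _ K(2) orbits _ d left_inv] x F
      by blast
  qed
  moreover have "B \<subseteq> F" "real (card B) \<le> real (card K) * (2 * d * N)"
    unfolding B_def N_def using card_conj_escape_union_le[OF F(1,3) K left right_inv] by auto
  ultimately have "\<bar>(\<Sum>x\<in>F. e x) / N\<bar> \<le> (N * (d + 1 / real (Suc M)) + real (card K) * (2 * d * N)) / N"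
    using abs_sum_le_if_small_off[OF F(1), of B e "d + 1 / real (Suc M)"] N d
    unfolding N_def by (simp add: divide_right_mono)
  also have "\<dots> = (d + 1 / real (Suc M) + 2 * real (card K) * d) * N / N"
    by (simp add: algebra_simps)
  also have "\<dots> = d + 1 / real (Suc M) + 2 * real (card K) * d"
    using N by simp
  finally show ?thesis
    using average unfolding N_def by simp
qed

lemma eventually_commuting_ratio_close_to_class_ratio:
  assumes "fin_gen_group G" "left_folner G F" "right_folner G F" "e > 0"
  shows "eventually (\<lambda>n.
    \<bar>real (card {(x, y) \<in> F n \<times> F n. x \<otimes> y = y \<otimes> x}) / (real (card (F n)))\<^sup>2
     - real (card {C \<in> conj_classes G. C \<inter> F n \<noteq> {}}) / real (card (F n))\<bar> \<le> e) sequentially"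
proof -
  have F: "finite (F n)" "F n \<noteq> {}" "F n \<subseteq> carrier G" "card (F n) > 0" for n
    using assms(2) unfolding left_folner_def fin_subset_seq_def by (auto simp: card_gt_0_iff)
  obtain M where M: "1 / real (Suc M) < e / 2"
    using reals_Archimedean[of "e / 2"] assms(4) by (auto simp: inverse_eq_divide)
  obtain K where K: "finite K" "K \<subseteq> carrier G"
    and orbits: "\<And>x. x \<in> carrier G \<Longrightarrow> conj_orbit G K x = conj_class G x \<or> Suc M \<le> card (conj_orbit G K x)"
    using obtain_conj_orbits_full_or_large[OF assms(1)] by blast
  define d where "d = e / (2 * (1 + 2 * real (card K)))"
  have "d * (1 + 2 * real (card K)) = e / 2"
    unfolding d_def by (simp add: field_simps)
  moreover have "d > 0"
    unfolding d_def using assms(4) by simp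
  ultimately have d: "d > 0" "d + 1 / real (Suc M) + 2 * real (card K) * d < e"
    using M by (auto simp: algebra_simps)
  have "eventually (\<lambda>n. \<forall>g\<in>K.
      real (card (sym_diff_set (g <# F n) (F n))) \<le> d * real (card (F n)) \<and>
      real (card (sym_diff_set (inv g <# F n) (F n))) \<le> d * real (card (F n)) \<and>
      real (card (sym_diff_set (F n #> inv g) (F n))) \<le> d * real (card (F n))) sequentially"
    using assms(2,3) K unfolding left_folner_def right_folner_def
    by (intro eventually_ball_finite ballI eventually_conj
        eventually_card_le_if_ratio_tendsto_zero[OF _ d(1) F(4)]) auto
  then show ?thesis
  proof eventually_elim
    case (elim n)
    then show ?case
      using commuting_ratio_close_to_class_ratio[OF F(1-3) K orbits less_imp_le[OF d(1)]] d(2)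
      by fastforce
  qed
qed

end

theorem theorem1p21:
  fixes G :: "('a, 'b) monoid_scheme" and F :: "nat \<Rightarrow> 'a set"
  assumes "group G" "fin_gen_group G" "amenable_group G"
    and "left_folner G F" "right_folner G F"
  shows "conj_ratio G F = deg_comm G F"
  unfolding conj_ratio_def deg_comm_def
  by (rule limsup_ereal_eq_if_eventually_close, rule eventually_mono,
      rule group.eventually_commuting_ratio_close_to_class_ratio[OF assms(1,2,4,5)])
    (auto simp: abs_minus_commute)

end
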